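(* For complex numbers $x,y$ with $y\neq 0$, define \[ A(x,y)=\sum_{n=0}^{\infty} x^n\binom{2n}{n}\sum_{k=0}^n\binom{n}{k}^2\binom{2k}{n}(-1)^k y^{2k-n}. \] If $x$ and $y$ are such that this double series converges absolutely, then \[ A(x,y)=\sum_{k=0}^{\infty}(-xy)^k\binom{2k}{k}^2 P_{2k}\!\left(\sqrt{1+\frac{4x}{y}}\right), \] where $P_m$ denotes the $m$-th Legendre polynomial.
   Context: $\binom{2k}{n}=0$ for $n>2k$. Since $P_{2k}$ is an even polynomial, the choice of square root is immaterial. *)

theory Defs
  imports "HOL-Analysis.Analysis"
begin

definition legendreP :: "nat \<Rightarrow> complex \<Rightarrow> complex" where
  "legendreP m z = (\<Sum>j\<le>m div 2. (-1)^j * of_nat (m choose j) * of_nat ((2*m - 2*j) choose m)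
                         * z ^ (m - 2*j)) / 2 ^ m"

definition A_term :: "complex \<Rightarrow> complex \<Rightarrow> nat \<Rightarrow> nat \<Rightarrow> complex" where
  "A_term x y n k = x ^ n * of_nat ((2*n) choose n) * of_nat ((n choose k)^2) * of_nat ((2*k) choose n)
                      * (-1)^k * y powi (2 * int k - int n)"

definition A_fun :: "complex \<Rightarrow> complex \<Rightarrow> complex" where
  "A_fun x y = (\<Sum>n. \<Sum>k\<le>n. A_term x y n k)"

end

theory Submission
  imports Defs
begin

text \<open>
  Only the terms with \<open>k \<le> n \<le> 2k\<close> are nonzero, so absolute convergence lets us
  sum the triangular array by columns \<open>k\<close> instead of rows \<open>n\<close>. Writing \<open>t = x/y\<close>,
  column \<open>k\<close> is \<open>(-xy)^k\<close> times \<open>\<Sum>n. C(2n,n) C(n,k)^2 C(2k,n) t^n\<close>, while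
  \<open>4^k P_2k(z) = \<Sum>j. b(k,j) z^(2(k-j))\<close> is a polynomial in \<open>z^2 = 1 + 4t\<close>.
  Expanding \<open>(1 + 4t)^(k-j)\<close> and comparing coefficients of \<open>t^(k+i)\<close> reduces the
  theorem to a binomial identity, proved by downward induction on \<open>i\<close>: both sides
  satisfy the same first-order recurrence in \<open>i\<close>. For the side built from the Legendre
  coefficients \<open>b(k,j)\<close> the recurrence comes from creative telescoping, driven by the
  ratio \<open>b(k,j+1) / b(k,j)\<close>.
\<close>

lemma sums_swap_triangular:
  fixes f :: "nat \<Rightarrow> nat \<Rightarrow> 'a::{banach,uniform_topological_group_add}"
  assumes summable: "(\<lambda>(n, k). norm (f n k)) summable_on {(n, k). k \<le> n}"
    and support: "\<And>k i. M k < i \<Longrightarrow> f (k + i) k = 0"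
  shows "(\<lambda>k. \<Sum>i\<le>M k. f (k + i) k) sums (\<Sum>n. \<Sum>k\<le>n. f n k)"
proof -
  have rows: "{(n, k). k \<le> n} = Sigma UNIV (\<lambda>n. {..n})"
    and columns: "{(n, k). k \<le> n} = prod.swap ` Sigma UNIV (\<lambda>k. {k..})"
    by auto
  have "(\<lambda>(n, k). f n k) summable_on {(n, k). k \<le> n}"
    using abs_summable_summable summable by (simp add: case_prod_beta')
  then obtain V where V: "((\<lambda>(n, k). f n k) has_sum V) {(n, k). k \<le> n}"
    using has_sum_infsum by blast
  have "((\<lambda>n. \<Sum>k\<le>n. f n k) has_sum V) UNIV"
    using V unfolding rows by (rule has_sum_Sigma') (simp add: has_sum_finite)
  then have row_sums: "(\<lambda>n. \<Sum>k\<le>n. f n k) sums V"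
    by (rule has_sum_imp_sums)
  have column_sums: "((\<lambda>(k, n). f n k) has_sum V) (Sigma UNIV (\<lambda>k. {k..}))"
    using V unfolding columns by (subst (asm) has_sum_reindex) (auto simp: comp_def)
  have column: "((\<lambda>n. f n k) has_sum (\<Sum>i\<le>M k. f (k + i) k)) {k..}" for k
  proof (rule has_sum_finite_neutralI[where B = "(\<lambda>i. k + i) ` {..M k}"])
    show "f n k = 0" if "n \<in> {k..} - (\<lambda>i. k + i) ` {..M k}" for n
    proof -
      from that have "k \<le> n" and "\<forall>i\<le>M k. n \<noteq> k + i"
        by auto
      then have "M k < n - k"
        by (metis le_add_diff_inverse not_less)
      then show ?thesis
        using support[of k "n - k"] \<open>k \<le> n\<close> by simp
    qed
    show "(\<Sum>i\<le>M k. f (k + i) k) = (\<Sum>n\<in>(\<lambda>i. k + i) ` {..M k}. f n k)"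
      by (simp add: sum.reindex)
  qed auto
  have "((\<lambda>k. \<Sum>i\<le>M k. f (k + i) k) has_sum V) UNIV"
    by (rule has_sum_Sigma'[OF column_sums]) (simp add: column)
  then have "(\<lambda>k. \<Sum>i\<le>M k. f (k + i) k) sums V"
    by (rule has_sum_imp_sums)
  with row_sums show ?thesis
    by (simp add: sums_unique[symmetric])
qed

lemma binomial_Suc_absorb_comp: "Suc k * (n choose Suc k) = (n - k) * (n choose k)"
  by (metis binomial_absorption binomial_absorb_comp)

lemma binomial_absorb_comp2:
  "(n - k) * (n - Suc k) * (n choose k) = n * (n - 1) * ((n - 2) choose k)"
  by (metis binomial_absorb_comp diff_Suc_eq_diff_pred mult.assoc mult.left_commute
      nat_1_add_1 plus_1_eq_Suc)

lemma Suc_times_central_binomial: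
  "Suc n * ((2 * Suc n) choose Suc n) = 2 * (2 * n + 1) * ((2 * n) choose n)"
  by (smt (verit) Suc_times_binomial_add Suc_times_binomial_eq ab_semigroup_mult_class.mult_ac(1)
      add.commute add_Suc_right mult.commute mult_2_right plus_1_eq_Suc)

lemma binomial_contiguous:
  "4 * (of_nat i + 1)^2 * (of_nat (p choose Suc i) :: 'a::comm_ring_1)
   = 2 * (of_nat p - of_nat i) * (2 * of_nat p + 2 * of_nat i + 1) * of_nat (p choose i)
     - 2 * of_nat p * (2 * of_nat p - 1) * of_nat ((p - 1) choose i)"
proof (cases "i \<le> p")
  case False
  then show ?thesis by (simp add: binomial_eq_0)
next
  case True
  have upper: "(of_nat i + 1) * of_nat (p choose Suc i) = (of_nat p - of_nat i) * (of_nat (p choose i) :: 'a)"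
    by (metis True binomial_Suc_absorb_comp of_nat_Suc of_nat_diff of_nat_mult add.commute)
  have lower: "of_nat p * of_nat ((p - 1) choose i) = (of_nat p - of_nat i) * (of_nat (p choose i) :: 'a)"
    by (metis True binomial_absorb_comp of_nat_diff of_nat_mult)
  have "4 * (of_nat i + 1)^2 * (of_nat (p choose Suc i) :: 'a)
      = 4 * (of_nat i + 1) * ((of_nat i + 1) * of_nat (p choose Suc i))"
    by (simp add: power2_eq_square algebra_simps)
  also have "\<dots> = 2 * (of_nat p - of_nat i) * (2 * of_nat p + 2 * of_nat i + 1) * of_nat (p choose i)
      - 2 * (2 * of_nat p - 1) * (of_nat p * of_nat ((p - 1) choose i))"
    unfolding upper lower by (simp add: algebra_simps)
  finally show ?thesis
    by (simp add: algebra_simps)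
qed

definition legendre_even_coeff :: "nat \<Rightarrow> nat \<Rightarrow> 'a::comm_ring_1" where
  "legendre_even_coeff k j = (-1)^j * of_nat ((2*k) choose j) * of_nat ((4*k - 2*j) choose (2*k))"

lemma binomial_legendre_ratio:
  assumes "j < k"
  shows "(k - j) * (2*k - 2*j - 1) * ((4*k - 2*j) choose (2*k))
       = (2*k - j) * (4*k - 2*j - 1) * ((4*k - 2 * Suc j) choose (2*k))"
proof -
  have "2 * ((k - j) * (2*k - 2*j - 1) * ((4*k - 2*j) choose (2*k)))
      = (4*k - 2*j - 2*k) * (4*k - 2*j - Suc (2*k)) * ((4*k - 2*j) choose (2*k))"
    using assms by (simp add: algebra_simps)
  also have "\<dots> = (4*k - 2*j) * (4*k - 2*j - 1) * ((4*k - 2*j - 2) choose (2*k))"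
    by (rule binomial_absorb_comp2)
  also have "\<dots> = 2 * ((2*k - j) * (4*k - 2*j - 1) * ((4*k - 2 * Suc j) choose (2*k)))"
    by (simp add: algebra_simps)
  finally show ?thesis by simp
qed

lemma legendre_even_coeff_Suc:
  assumes "j < k"
  shows "legendre_even_coeff k (Suc j) * (of_nat j + 1) * (4 * of_nat k - 2 * of_nat j - 1)
       = - legendre_even_coeff k j * (of_nat k - of_nat j)
           * (2 * of_nat k - 2 * of_nat j - 1 :: 'a::comm_ring_1)"
proof -
  define c where "c = (of_nat ((2*k) choose j) :: 'a)"
  define d where "d = (of_nat ((4*k - 2*j) choose (2*k)) :: 'a)"
  define d' where "d' = (of_nat ((4*k - 2 * Suc j) choose (2*k)) :: 'a)"
  have casts: "of_nat (k - j) = (of_nat k - of_nat j :: 'a)"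
    "of_nat (2*k - j) = (2 * of_nat k - of_nat j :: 'a)"
    "of_nat (2*k - 2*j - 1) = (2 * of_nat k - 2 * of_nat j - 1 :: 'a)"
    "of_nat (4*k - 2*j - 1) = (4 * of_nat k - 2 * of_nat j - 1 :: 'a)"
    using assms by (simp_all add: of_nat_diff)
  have upper: "(of_nat j + 1) * of_nat ((2*k) choose Suc j) = (2 * of_nat k - of_nat j) * c"
    unfolding c_def casts(2)[symmetric]
    by (metis binomial_Suc_absorb_comp of_nat_Suc of_nat_mult add.commute)
  have lower: "(of_nat k - of_nat j) * (2 * of_nat k - 2 * of_nat j - 1) * d
      = (2 * of_nat k - of_nat j) * (4 * of_nat k - 2 * of_nat j - 1) * d'"
    using arg_cong[OF binomial_legendre_ratio[OF assms], of "of_nat :: nat \<Rightarrow> 'a"]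
    unfolding d_def d'_def of_nat_mult casts .
  have "legendre_even_coeff k (Suc j) * (of_nat j + 1) * (4 * of_nat k - 2 * of_nat j - 1)
      = (-1)^Suc j * ((of_nat j + 1) * of_nat ((2*k) choose Suc j)) * (4 * of_nat k - 2 * of_nat j - 1) * d'"
    by (simp add: legendre_even_coeff_def d'_def algebra_simps)
  also have "\<dots> = (-1)^Suc j * c * ((2 * of_nat k - of_nat j) * (4 * of_nat k - 2 * of_nat j - 1) * d')"
    unfolding upper by (simp add: algebra_simps)
  also have "\<dots> = - legendre_even_coeff k j * (of_nat k - of_nat j) * (2 * of_nat k - 2 * of_nat j - 1)"
    unfolding lower[symmetric] by (simp add: legendre_even_coeff_def c_def d_def algebra_simps)
  finally show ?thesis .
qed

lemma legendre_even_coeff_telescope: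
  "(\<Sum>j\<le>k. legendre_even_coeff k j * (2 * of_nat j * (4 * of_nat k - 2 * of_nat j + 1))
          * of_nat ((k - j) choose i)
      + legendre_even_coeff k j * (2 * of_nat (k - j) * (2 * of_nat (k - j) - 1))
          * of_nat ((k - j - 1) choose i))
   = (0 :: 'a::comm_ring_1)"
proof -
  define U :: "nat \<Rightarrow> 'a" where
    "U j = legendre_even_coeff k j * (2 * of_nat j * (4 * of_nat k - 2 * of_nat j + 1))
      * of_nat ((k - j) choose i)" for j
  define T :: "nat \<Rightarrow> 'a" where
    "T j = legendre_even_coeff k j * (2 * of_nat (k - j) * (2 * of_nat (k - j) - 1))
      * of_nat ((k - j - 1) choose i)" for j
  have T_eq: "T j = - U (Suc j)" if "j < k" for j
  proof -
    have "U (Suc j) = 2 * of_nat ((k - Suc j) choose i)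
        * (legendre_even_coeff k (Suc j) * (of_nat j + 1) * (4 * of_nat k - 2 * of_nat j - 1))"
      by (simp add: U_def algebra_simps)
    also have "\<dots> = - (2 * of_nat ((k - Suc j) choose i)
        * (legendre_even_coeff k j * (of_nat k - of_nat j) * (2 * of_nat k - 2 * of_nat j - 1)))"
      by (simp add: legendre_even_coeff_Suc[OF that])
    also have "\<dots> = - T j"
      using that by (simp add: T_def of_nat_diff algebra_simps)
    finally show ?thesis by simp
  qed
  have "(\<Sum>j\<le>k. U j + T j) = (\<Sum>j<k. U j - U (Suc j)) + (U k + T k)"
    using T_eq by (simp add: lessThan_Suc_atMost[symmetric])
  also have "\<dots> = U 0 + T k"
    by (simp add: sum_lessThan_telescope')
  also have "\<dots> = 0"
    by (simp add: U_def T_def)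
  finally show ?thesis
    unfolding U_def T_def .
qed

text \<open>The coefficient of \<open>v^i\<close> in \<open>\<Sum>j. b(k,j) (1 + v)^(k-j)\<close>.\<close>

definition legendre_shift_coeff :: "nat \<Rightarrow> nat \<Rightarrow> 'a::comm_ring_1" where
  "legendre_shift_coeff k i = (\<Sum>j\<le>k. legendre_even_coeff k j * of_nat ((k - j) choose i))"

lemma legendre_shift_coeff_Suc:
  "4 * (of_nat i + 1)^2 * legendre_shift_coeff k (Suc i)
     = (2 * of_nat k - 2 * of_nat i) * (2 * of_nat k + 2 * of_nat i + 1)
         * (legendre_shift_coeff k i :: 'a::comm_ring_1)"
proof -
  let ?r = "(2 * of_nat k - 2 * of_nat i) * (2 * of_nat k + 2 * of_nat i + 1) :: 'a"
  let ?U = "\<lambda>j. legendre_even_coeff k j * (2 * of_nat j * (4 * of_nat k - 2 * of_nat j + 1))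
    * of_nat ((k - j) choose i) :: 'a"
  let ?T = "\<lambda>j. legendre_even_coeff k j * (2 * of_nat (k - j) * (2 * of_nat (k - j) - 1))
    * of_nat ((k - j - 1) choose i) :: 'a"
  have summand: "legendre_even_coeff k j * (4 * (of_nat i + 1)^2 * of_nat ((k - j) choose Suc i))
      = legendre_even_coeff k j * ?r * of_nat ((k - j) choose i) - (?U j + ?T j)"
    if "j \<le> k" for j
  proof -
    have k_minus_j: "of_nat (k - j) = (of_nat k - of_nat j :: 'a)"
      using that by (simp add: of_nat_diff)
    show ?thesis
      unfolding binomial_contiguous k_minus_j by (simp add: algebra_simps)
  qed
  have "4 * (of_nat i + 1)^2 * legendre_shift_coeff k (Suc i)
      = (\<Sum>j\<le>k. legendre_even_coeff k j * (4 * (of_nat i + 1)^2 * of_nat ((k - j) choose Suc i)) :: 'a)"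
    by (simp add: legendre_shift_coeff_def sum_distrib_left algebra_simps)
  also have "\<dots> = (\<Sum>j\<le>k. legendre_even_coeff k j * ?r * of_nat ((k - j) choose i))
      - (\<Sum>j\<le>k. ?U j + ?T j)"
    by (simp add: summand sum_subtractf)
  also have "\<dots> = (\<Sum>j\<le>k. legendre_even_coeff k j * ?r * of_nat ((k - j) choose i))"
    by (simp only: legendre_even_coeff_telescope diff_zero)
  also have "\<dots> = ?r * legendre_shift_coeff k i"
    unfolding legendre_shift_coeff_def sum_distrib_left by (simp add: mult_ac)
  finally show ?thesis .
qed

definition A_coeff :: "nat \<Rightarrow> nat \<Rightarrow> nat" where
  "A_coeff k n = ((2*n) choose n) * (n choose k)^2 * ((2*k) choose n)"

lemma A_coeff_Suc:
  "(Suc i)^2 * A_coeff k (Suc (k + i)) = 2 * (k - i) * (2 * (k + i) + 1) * A_coeff k (k + i)"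
proof -
  define n where "n = k + i"
  define d where "d = k - i"
  have central: "Suc n * ((2 * Suc n) choose Suc n) = 2 * (2 * n + 1) * ((2 * n) choose n)"
    by (rule Suc_times_central_binomial)
  have middle: "Suc i * (Suc n choose k) = Suc n * (n choose k)"
    using binomial_absorb_comp[of "Suc n" k] by (simp add: n_def Suc_diff_le)
  have last: "Suc n * ((2*k) choose Suc n) = d * ((2*k) choose n)"
    using binomial_Suc_absorb_comp[of n "2*k"] by (simp add: n_def d_def)
  have "(Suc n)^2 * ((Suc i)^2 * A_coeff k (Suc n))
      = (Suc n * ((2 * Suc n) choose Suc n)) * (Suc i * (Suc n choose k))^2 * (Suc n * ((2*k) choose Suc n))"
    by (simp add: A_coeff_def power2_eq_square algebra_simps)
  also have "\<dots> = (Suc n)^2 * (2 * d * (2 * n + 1) * A_coeff k n)"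
    unfolding central middle last by (simp add: A_coeff_def power2_eq_square algebra_simps)
  finally show ?thesis
    unfolding n_def d_def by simp
qed

lemma A_coeff_eq_legendre_shift_coeff:
  assumes "i \<le> k"
  shows "4^k * of_nat (A_coeff k (k + i))
       = of_nat (((2*k) choose k)^2) * 4^i * (legendre_shift_coeff k i :: 'a::{idom,ring_char_0})"
  using assms
proof (induction i rule: inc_induct)
  case base
  have "legendre_shift_coeff k k = (legendre_even_coeff k 0 :: 'a)"
    unfolding legendre_shift_coeff_def
    by (subst sum.mono_neutral_right[of "{..k}" "{0}"]) (auto simp: binomial_eq_0)
  then show ?case
    by (simp add: A_coeff_def legendre_even_coeff_def mult_2 [symmetric] algebra_simps)
next
  case (step i)
  define r :: nat where "r = 2 * (k - i) * (2 * (k + i) + 1)"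
  have r_nonzero: "r \<noteq> 0"
    using step.hyps(2) by (simp add: r_def)
  have "of_nat (k - i) = (of_nat k - of_nat i :: 'a)"
    using step.hyps(2) by (simp add: of_nat_diff)
  then have r_cast: "(of_nat r :: 'a) = (2 * of_nat k - 2 * of_nat i) * (2 * of_nat k + 2 * of_nat i + 1)"
    by (simp only: r_def of_nat_mult of_nat_add of_nat_numeral of_nat_1) (simp add: algebra_simps)
  have "of_nat r * (4^k * of_nat (A_coeff k (k + i))) = 4^k * (of_nat (r * A_coeff k (k + i)) :: 'a)"
    by (simp add: algebra_simps)
  also have "\<dots> = 4^k * of_nat ((Suc i)^2 * A_coeff k (Suc (k + i)))"
    by (simp only: r_def A_coeff_Suc)
  also have "\<dots> = (of_nat i + 1)^2 * (4^k * of_nat (A_coeff k (k + Suc i)))"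
    by (simp add: algebra_simps)
  also have "\<dots> = of_nat (((2*k) choose k)^2) * 4^i
      * (4 * (of_nat i + 1)^2 * legendre_shift_coeff k (Suc i))"
    unfolding step.IH by (simp add: algebra_simps)
  also have "\<dots> = of_nat r * (of_nat (((2*k) choose k)^2) * 4^i * legendre_shift_coeff k i)"
    unfolding legendre_shift_coeff_Suc r_cast by (simp add: algebra_simps)
  finally show ?case
    using r_nonzero by simp
qed

lemma A_coeff_generating_poly:
  fixes t :: "'a::field_char_0"
  shows "(\<Sum>i\<le>k. of_nat (A_coeff k (k + i)) * t^(k + i))
       = t^k * of_nat (((2*k) choose k)^2) * (\<Sum>j\<le>k. legendre_even_coeff k j * (1 + 4*t)^(k - j)) / 4^k"
proof -
  have expand: "(1 + 4*t)^(k - j) = (\<Sum>i\<le>k. of_nat ((k - j) choose i) * (4*t)^i)" for j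
  proof -
    have "(1 + 4*t)^(k - j) = (\<Sum>i\<le>k - j. of_nat ((k - j) choose i) * (4*t)^i)"
      using binomial_ring[of "4*t" 1 "k - j"] by (simp add: add.commute)
    also have "\<dots> = (\<Sum>i\<le>k. of_nat ((k - j) choose i) * (4*t)^i)"
      by (rule sum.mono_neutral_left) (auto simp: binomial_eq_0)
    finally show ?thesis .
  qed
  have "(\<Sum>j\<le>k. legendre_even_coeff k j * (1 + 4*t)^(k - j))
      = (\<Sum>j\<le>k. \<Sum>i\<le>k. legendre_even_coeff k j * of_nat ((k - j) choose i) * (4*t)^i)"
    unfolding expand sum_distrib_left by (simp add: mult.assoc)
  also have "\<dots> = (\<Sum>i\<le>k. legendre_shift_coeff k i * (4*t)^i)"
    unfolding legendre_shift_coeff_def sum_distrib_right by (rule sum.swap)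
  finally have shifted: "(\<Sum>j\<le>k. legendre_even_coeff k j * (1 + 4*t)^(k - j))
      = (\<Sum>i\<le>k. legendre_shift_coeff k i * (4*t)^i)" .
  have "of_nat (A_coeff k (k + i)) * t^(k + i)
      = t^k * of_nat (((2*k) choose k)^2) * (legendre_shift_coeff k i * (4*t)^i) / 4^k" if "i \<le> k" for i
    using A_coeff_eq_legendre_shift_coeff[OF that, where 'a = 'a]
    by (simp add: field_simps power_add power_mult_distrib)
  then show ?thesis
    unfolding shifted sum_distrib_left sum_divide_distrib by (intro sum.cong) simp_all
qed

lemma legendreP_even_csqrt:
  "legendreP (2*k) (csqrt w) = (\<Sum>j\<le>k. legendre_even_coeff k j * w^(k - j)) / 4^k"
proof -
  have "csqrt w ^ (2*k - 2*j) = w^(k - j)" for j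
    by (metis diff_mult_distrib2 power2_csqrt power_mult)
  then show ?thesis
    by (simp add: legendreP_def legendre_even_coeff_def power_mult)
qed

lemma A_term_column_term:
  assumes "i \<le> k" and "x = t * y"
  shows "A_term x y (k + i) k = (-1)^k * y^(2*k) * (of_nat (A_coeff k (k + i)) * t^(k + i))"
proof -
  have "2 * int k - int (k + i) = int (k - i)"
    using assms by simp
  then have exponent: "y powi (2 * int k - int (k + i)) = y^(k - i)"
    by (simp only: power_int_of_nat)
  have "2*k = (k + i) + (k - i)"
    using assms by simp
  then have "y^(2*k) = y^(k + i) * y^(k - i)"
    by (simp only: power_add)
  moreover have "A_term x y (k + i) k
      = (-1)^k * (y^(k + i) * y^(k - i)) * (of_nat (A_coeff k (k + i)) * t^(k + i))"
    unfolding A_term_def A_coeff_def exponent assms(2) by (simp add: power_mult_distrib mult_ac)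
  ultimately show ?thesis
    by simp
qed

lemma A_term_column_sum:
  assumes "y \<noteq> 0"
  shows "(\<Sum>i\<le>k. A_term x y (k + i) k)
       = (- x * y)^k * of_nat (((2*k) choose k)^2) * legendreP (2*k) (csqrt (1 + 4 * x / y))"
proof -
  define t where "t = x / y"
  have x_eq: "x = t * y"
    using assms by (simp add: t_def)
  have "(- x * y)^k = ((-1) * y^2 * t)^k"
    by (simp add: x_eq power2_eq_square algebra_simps)
  also have "\<dots> = (-1)^k * y^(2*k) * t^k"
    by (simp only: power_mult_distrib power_mult)
  finally have power: "(- x * y)^k = (-1)^k * y^(2*k) * t^k" .
  have "(\<Sum>i\<le>k. A_term x y (k + i) k)
      = (-1)^k * y^(2*k) * (\<Sum>i\<le>k. of_nat (A_coeff k (k + i)) * t^(k + i))"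
    unfolding sum_distrib_left by (intro sum.cong) (simp_all add: A_term_column_term[OF _ x_eq])
  also have "\<dots> = (-1)^k * y^(2*k) * (t^k * of_nat (((2*k) choose k)^2)
      * (\<Sum>j\<le>k. legendre_even_coeff k j * (1 + 4*t)^(k - j)) / 4^k)"
    unfolding A_coeff_generating_poly ..
  also have "\<dots> = (- x * y)^k * of_nat (((2*k) choose k)^2) * legendreP (2*k) (csqrt (1 + 4*t))"
    unfolding power legendreP_even_csqrt by (simp add: mult_ac)
  finally show ?thesis
    by (simp add: t_def)
qed

theorem proposition2p1:
  fixes x y :: complex
  assumes "y \<noteq> 0"
    and "(\<lambda>(n, k). norm (A_term x y n k)) summable_on {(n, k). k \<le> n}"
  shows "(\<lambda>k. (- x * y) ^ k * of_nat (((2*k) choose k)^2) * legendreP (2*k) (csqrt (1 + 4 * x / y)))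
           sums A_fun x y"
proof -
  have "A_term x y (k + i) k = 0" if "k < i" for k i
    using that by (simp add: A_term_def binomial_eq_0)
  then have "(\<lambda>k. \<Sum>i\<le>k. A_term x y (k + i) k) sums A_fun x y"
    unfolding A_fun_def by (rule sums_swap_triangular[OF assms(2)])
  then show ?thesis
    unfolding A_term_column_sum[OF assms(1)] .
qed

end
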